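(* Let $q>2$, $\sigma,B,K>0$, and let $X_1,\dots,X_n$ be independent mean-zero real-valued random variables with \[ \frac1n\sum_{i=1}^n\mathrm{Var}[X_i]\le\sigma^2,\qquad\frac1n\sum_{i=1}^n\mathbb{E}[|X_i|^q]\le B^q,\qquad\max_{1\le i\le n}|X_i|\le K\ \text{a.s.} \] Let $R=\big(1-(B^q/(\sigma^2K^{q-2}))^{1/(q-2)}\big)_+$. Then for every $z>1$, with probability at least $1-1/z$, \[ \frac1n\sum_{i=1}^nX_i<B\Big(\frac{\sigma^2}{B^2}\Big)^{\frac{q-1}{q-2}}\Psi^{-1}\Big(\Big(\frac{B^2}{\sigma^2}\Big)^{\frac q{q-2}}\frac{\ln z}n\Big)+\frac{2K\ln z}{nq}\Big(W\Big(\frac{(K/B)^{q/([q]+1)}(\ln z)^{1/([q]+1)}}{10\,(nR)^{1/([q]+1)}}\Big)\Big)^{-1}. \]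
   Context: $\Psi(x)=(1+x)\ln(1+x)-x$ for $x\ge0$, with inverse $\Psi^{-1}$ on $[0,\infty)$. $W$ is the Lambert function (principal branch, $W(x)e^{W(x)}=x$ for $x\ge0$), $[q]$ denotes the integer part of $q$, and $(x)_+=\max\{x,0\}$. When $R=0$ the argument of $W$ is interpreted as $+\infty$ and the second term on the right-hand side as $0$. *)

theory Defs
  imports "HOL-Probability.Probability"
begin

definition Psi :: "real \<Rightarrow> real" where
  "Psi x = (1 + x) * ln (1 + x) - x"

definition Psi_inv :: "real \<Rightarrow> real" where
  "Psi_inv y = (THE x. x \<ge> 0 \<and> Psi x = y)"

definition lambertW :: "real \<Rightarrow> real" where
  "lambertW y = (THE w. w \<ge> 0 \<and> w * exp w = y)"

end

theory Submission
  imports Defs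
begin

text \<open>
  Chernoff's method with a majorant of the exponential adapted to two moments. Let the scale a
  be defined by B^q = \<sigma>^2 a^(q-2). For |x| \<le> K, every term (l x)^k/k! of the exponential
  series with 2 \<le> k \<le> q is bounded by interpolating |x|^k between x^2 and |x|^q (weighted
  AM-GM), and every term with k > q by |x|^q K^(k-q) \<le> |x|^q (a^(k-q) + k (1 - a/K)_+ K^(k-q)).
  Taking expectations, the average log-mgf of the X_i is at most \<sigma>^2/a^2 (e^(l a) - 1 - l a)
  plus a remainder of order (1 - a/K)_+ (l K)^([q]+1) e^(l K) / [q]!. With y = ln z / n and
  v = \<Psi>^-1(a^2 y/\<sigma>^2), the rate l = ln(1 + v)/a gains exactly (\<sigma>^2/a^2) \<Psi>(v) = y against
  the first part at the threshold (\<sigma>^2/a) v; the rate l = ([q]+1) W/K, with W the Lambert W value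
  of the theorem, keeps the remainder below y because m^m \<le> 10^m (m-1)!. The smaller of the
  two rates gives the bound.
\<close>

section \<open>Inverting \<Psi> and w e^w\<close>

lemma the_nonneg_preimage:
  fixes f :: "real \<Rightarrow> real"
  assumes mono: "strict_mono_on {0..} f" and cont: "continuous_on {0..} f"
    and "f 0 \<le> y" and "0 \<le> b" and "y \<le> f b"
  shows "0 \<le> (THE x. 0 \<le> x \<and> f x = y)" and "f (THE x. 0 \<le> x \<and> f x = y) = y"
proof -
  obtain x where x: "0 \<le> x" "x \<le> b" "f x = y"
    using IVT'[of f 0 y b] continuous_on_subset[OF cont] assms(3-5) by force
  have "\<exists>!x. 0 \<le> x \<and> f x = y"
  proof (rule ex1I[of _ x])
    show "\<And>w. 0 \<le> w \<and> f w = y \<Longrightarrow> w = x"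
      using x strict_mono_on_eqD[OF mono] by auto
  qed (use x in auto)
  from theI'[OF this] show "0 \<le> (THE x. 0 \<le> x \<and> f x = y)" "f (THE x. 0 \<le> x \<and> f x = y) = y"
    by auto
qed

lemma Psi_0 [simp]: "Psi 0 = 0"
  by (simp add: Psi_def)

lemma continuous_on_Psi: "continuous_on {0..} Psi"
  unfolding Psi_def[abs_def] by (intro continuous_intros) auto

lemma strict_mono_on_Psi: "strict_mono_on {0..} Psi"
proof (rule strict_mono_onI)
  fix x y :: real assume x: "x \<in> {0..}" and "x < y"
  show "Psi x < Psi y"
  proof (rule DERIV_pos_imp_increasing_open[OF \<open>x < y\<close>])
    fix t assume "x < t" "t < y"
    with x have "(Psi has_real_derivative ln (1 + t)) (at t)" "0 < ln (1 + t)"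
      unfolding Psi_def[abs_def] by (auto intro!: derivative_eq_intros)
    then show "\<exists>d. (Psi has_real_derivative d) (at t) \<and> 0 < d" by blast
  next
    show "continuous_on {x..y} Psi"
      using x by (intro continuous_on_subset[OF continuous_on_Psi]) auto
  qed
qed

lemma
  assumes "0 < y"
  shows Psi_inv_pos: "0 < Psi_inv y" and Psi_Psi_inv: "Psi (Psi_inv y) = y"
proof -
  define b where "b = exp (y + 1)"
  have "y + 1 \<le> ln (1 + b)"
    by (subst ln_ge_iff) (auto simp: b_def intro: add_pos_pos)
  then have "(1 + b) * (y + 1) - b \<le> Psi b"
    unfolding Psi_def by (intro diff_right_mono mult_left_mono) (auto simp: b_def)
  moreover have "y \<le> (1 + b) * (y + 1) - b"
    using assms by (simp add: algebra_simps b_def)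
  ultimately have "0 \<le> Psi_inv y" and "Psi (Psi_inv y) = y"
    unfolding Psi_inv_def
    using the_nonneg_preimage[OF strict_mono_on_Psi continuous_on_Psi, of y b] assms
    by (auto simp: b_def)
  then show "Psi (Psi_inv y) = y" and "0 < Psi_inv y"
    using assms by (auto simp: le_less)
qed

lemma
  assumes "0 < y"
  shows lambertW_pos: "0 < lambertW y" and lambertW_times_exp: "lambertW y * exp (lambertW y) = y"
proof -
  have mono: "strict_mono_on {0..} (\<lambda>w::real. w * exp w)"
    by (rule strict_mono_onI) (auto intro: mult_strict_mono)
  have "y \<le> y * exp y"
    using assms by simp
  moreover have "continuous_on {0..} (\<lambda>w::real. w * exp w)"
    by (intro continuous_intros)
  ultimately have "0 \<le> lambertW y" and "lambertW y * exp (lambertW y) = y"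
    unfolding lambertW_def using the_nonneg_preimage[OF mono, of y y] assms by auto
  then show "lambertW y * exp (lambertW y) = y" and "0 < lambertW y"
    using assms by (auto simp: le_less)
qed

section \<open>Interpolation between the second and the q-th moment\<close>

lemma power_le_moment_interpolation:
  fixes y a q :: real
  assumes "0 \<le> y" and "0 < a" and "2 \<le> k" and "real k \<le> q" and "2 < q"
  shows "y ^ k \<le> (q - k) / (q - 2) * (y\<^sup>2 * a powr (real k - 2))
                 + (real k - 2) / (q - 2) * (y powr q * a powr (real k - q))"
proof (cases "y = 0")
  case True
  then show ?thesis
    using assms by (simp add: power_0_left)
next
  case False
  with assms have "0 < y" by simp
  define \<theta> where "\<theta> = (q - k) / (q - 2)"
  define A where "A = y\<^sup>2 * a powr (real k - 2)"
  define C where "C = y powr q * a powr (real k - q)"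
  have \<theta>: "0 \<le> \<theta>" "\<theta> \<le> 1" "1 - \<theta> = (real k - 2) / (q - 2)"
    using assms by (auto simp: \<theta>_def field_simps)
  have "0 < A" "0 < C"
    using \<open>0 < y\<close> assms by (auto simp: A_def C_def)
  \<comment> \<open>weighted AM-GM for A and C; \<theta> is chosen so that A^\<theta> C^(1-\<theta>) = y^k\<close>
  have lnA: "ln A = 2 * ln y + (real k - 2) * ln a"
    and lnC: "ln C = q * ln y + (real k - q) * ln a"
    using \<open>0 < y\<close> assms by (simp_all add: A_def C_def ln_mult ln_realpow)
  have "(q - 2) * (\<theta> * ln A + (1 - \<theta>) * ln C)
      = ((q - 2) * \<theta>) * ln A + ((q - 2) * (1 - \<theta>)) * ln C"
    by (simp add: algebra_simps)
  also have "\<dots> = (q - k) * ln A + (real k - 2) * ln C"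
    using assms unfolding \<theta>(3) by (simp add: \<theta>_def)
  also have "\<dots> = (q - 2) * (k * ln y)"
    unfolding lnA lnC by (simp add: algebra_simps)
  finally have "\<theta> * ln A + (1 - \<theta>) * ln C = k * ln y"
    using assms by simp
  then have "A powr \<theta> * C powr (1 - \<theta>) = y ^ k"
    using \<open>0 < A\<close> \<open>0 < C\<close> \<open>0 < y\<close>
    by (simp add: powr_def exp_add[symmetric] ln_realpow[symmetric])
  moreover have "A powr \<theta> * C powr (1 - \<theta>) \<le> \<theta> * A + (1 - \<theta>) * C"
    using Youngs_inequality_0[of \<theta> "1 - \<theta>" A C] \<theta> \<open>0 < A\<close> \<open>0 < C\<close> by simp
  ultimately show ?thesis
    by (simp add: \<theta>(3) flip: \<theta>_def A_def C_def)
qed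

lemma powr_le_powr_plus_defect:
  fixes a K p :: real
  assumes "0 < a" and "0 < K" and "0 \<le> p" and "p \<le> real k"
  shows "K powr p \<le> a powr p + k * max 0 (1 - a / K) * K powr p"
proof (cases "K \<le> a")
  case True
  then have "K powr p \<le> a powr p"
    using assms by (intro powr_mono2) auto
  then show ?thesis
    by (simp add: add_increasing2)
next
  case False
  define s where "s = a / K"
  have s: "0 < s" "s < 1"
    using False assms by (auto simp: s_def)
  have "1 - k * (1 - s) \<le> s ^ k"
    using Bernoulli_inequality[of "s - 1" k] s by (simp add: algebra_simps)
  also have "\<dots> = s powr real k"
    using s by (simp add: powr_realpow)
  also have "\<dots> \<le> s powr p"
    using s assms by (intro powr_mono') auto
  finally have "K powr p * (1 - k * (1 - s)) \<le> K powr p * s powr p"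
    by (intro mult_left_mono) auto
  moreover have "a powr p = s powr p * K powr p"
    using s assms by (simp add: s_def powr_divide)
  ultimately show ?thesis
    using s by (simp add: s_def algebra_simps)
qed

lemma exp_sums_real: "(\<lambda>k. u ^ k / fact k) sums exp (u::real)"
  using exp_converges[of u] by (simp add: divide_inverse mult.commute)

lemma exp_tail_sums:
  "(\<lambda>j. u ^ (j + M) / fact (j + M)) sums (exp u - (\<Sum>k<M. u ^ k / fact k))"
  for u :: real
  using exp_sums_real[of u] by (subst sums_iff_shift) simp

lemma fact_mult_fact_le_fact_add:
  "fact m * fact n \<le> (fact (m + n) :: 'a :: linordered_semidom)"
proof -
  have "fact m * fact n \<le> (fact (m + n) :: nat)"
    by (rule dvd_imp_le[OF fact_fact_dvd_fact]) simp
  then have "of_nat (fact m * fact n) \<le> (of_nat (fact (m + n)) :: 'a)"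
    by (rule of_nat_mono)
  then show ?thesis
    by simp
qed

lemma weighted_exp_tail_le:
  fixes u :: real
  assumes "0 \<le> u" and "0 < M"
  shows "summable (\<lambda>j. (j + M) * u ^ (j + M) / fact (j + M))"
    and "(\<Sum>j. (j + M) * u ^ (j + M) / fact (j + M)) \<le> u ^ M / fact (M - 1) * exp u"
proof -
  obtain m where M: "M = Suc m"
    using assms(2) gr0_implies_Suc by blast
  have le: "(j + M) * u ^ (j + M) / fact (j + M) \<le> u ^ M / fact (M - 1) * (u ^ j / fact j)" for j
  proof -
    have "fact (j + M) = (j + M) * (fact (m + j) :: real)"
      by (simp add: M add.commute)
    then have "(j + M) * u ^ (j + M) / fact (j + M) = u ^ (j + M) / fact (m + j)"
      using assms(2) by simp
    also have "\<dots> \<le> u ^ (j + M) / (fact m * fact j)"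
      using assms by (intro divide_left_mono fact_mult_fact_le_fact_add) auto
    also have "\<dots> = u ^ M / fact (M - 1) * (u ^ j / fact j)"
      by (simp add: M power_add)
    finally show ?thesis .
  qed
  have sums: "(\<lambda>j. u ^ M / fact (M - 1) * (u ^ j / fact j)) sums (u ^ M / fact (M - 1) * exp u)"
    by (intro sums_mult exp_sums_real)
  show summable: "summable (\<lambda>j. (j + M) * u ^ (j + M) / fact (j + M))"
    by (rule summable_comparison_test'[OF sums_summable[OF sums]]) (use le assms in simp)
  show "(\<Sum>j. (j + M) * u ^ (j + M) / fact (j + M)) \<le> u ^ M / fact (M - 1) * exp u"
    using suminf_le[OF le summable sums_summable[OF sums]] sums_unique[OF sums] by simp
qed

lemma power_mult_le_power_abs:
  fixes l x :: real
  assumes "0 \<le> l"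
  shows "(l * x) ^ k \<le> l ^ k * \<bar>x\<bar> ^ k"
proof -
  have "(l * x) ^ k \<le> \<bar>l * x\<bar> ^ k"
    by (metis abs_ge_self power_abs)
  then show ?thesis
    using assms by (simp add: abs_mult power_mult_distrib)
qed

lemma exp_partial_sum_split:
  fixes u :: real
  assumes "2 \<le> M"
  shows "(\<Sum>k<M. u ^ k / fact k) = 1 + u + (\<Sum>k=2..<M. u ^ k / fact k)"
  using sum.atLeastLessThan_concat[of 0 2 M "\<lambda>k. u ^ k / fact k"] assms
  by (simp add: atLeast0LessThan numeral_2_eq_2)

lemma exp_head_le:
  fixes l a q x :: real
  assumes "0 \<le> l" and "0 < a" and "2 < q" and "2 \<le> M" and "real M \<le> q + 1"
  shows "(\<Sum>k<M. (l * x) ^ k / fact k) \<le> 1 + l * x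
           + (\<Sum>k=2..<M. l ^ k / fact k * ((q - k) / (q - 2) * a powr (real k - 2))) * x\<^sup>2
           + (\<Sum>k=2..<M. l ^ k / fact k * ((real k - 2) / (q - 2) * a powr (real k - q))) * \<bar>x\<bar> powr q"
proof -
  have term_le: "(l * x) ^ k / fact k \<le> l ^ k / fact k * ((q - k) / (q - 2) * a powr (real k - 2) * x\<^sup>2
                   + (real k - 2) / (q - 2) * a powr (real k - q) * \<bar>x\<bar> powr q)"
    if "k \<in> {2..<M}" for k
  proof -
    have "(l * x) ^ k \<le> l ^ k * \<bar>x\<bar> ^ k"
      using assms(1) by (rule power_mult_le_power_abs)
    also have "\<dots> \<le> l ^ k * ((q - k) / (q - 2) * (\<bar>x\<bar>\<^sup>2 * a powr (real k - 2))
                 + (real k - 2) / (q - 2) * (\<bar>x\<bar> powr q * a powr (real k - q)))"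
      using that assms by (intro mult_left_mono power_le_moment_interpolation) auto
    finally show ?thesis
      by (simp add: divide_right_mono mult_ac)
  qed
  have "(\<Sum>k<M. (l * x) ^ k / fact k) = 1 + l * x + (\<Sum>k=2..<M. (l * x) ^ k / fact k)"
    using assms(4) by (rule exp_partial_sum_split)
  also have "\<dots> \<le> 1 + l * x + (\<Sum>k=2..<M. l ^ k / fact k *
      ((q - k) / (q - 2) * a powr (real k - 2) * x\<^sup>2 + (real k - 2) / (q - 2) * a powr (real k - q) * \<bar>x\<bar> powr q))"
    using term_le by (intro add_left_mono sum_mono)
  finally show ?thesis
    by (simp add: sum_distrib_left sum_distrib_right sum.distrib distrib_left mult_ac)
qed

lemma abs_power_le_powr_mult:
  fixes x K q :: real
  assumes "\<bar>x\<bar> \<le> K" and "0 < q" and "q \<le> real k"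
  shows "\<bar>x\<bar> ^ k \<le> \<bar>x\<bar> powr q * K powr (real k - q)"
proof (cases "x = 0")
  case True
  moreover have "k \<noteq> 0"
    using assms by auto
  ultimately show ?thesis
    by (simp add: power_0_left)
next
  case False
  then have "\<bar>x\<bar> ^ k = \<bar>x\<bar> powr q * \<bar>x\<bar> powr (real k - q)"
    by (simp add: powr_add[symmetric] powr_realpow[symmetric])
  also have "\<dots> \<le> \<bar>x\<bar> powr q * K powr (real k - q)"
    using assms by (intro mult_left_mono powr_mono2) auto
  finally show ?thesis .
qed

lemma power_le_tail_majorant:
  fixes l a K q x :: real
  assumes "0 \<le> l" and "0 < a" and "0 < K" and "\<bar>x\<bar> \<le> K" and "0 < q" and "q \<le> real k"
  shows "(l * x) ^ k \<le> \<bar>x\<bar> powr q *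
           (a powr (-q) * (l * a) ^ k + max 0 (1 - a / K) * K powr (-q) * (k * (l * K) ^ k))"
proof -
  have "(l * x) ^ k \<le> l ^ k * \<bar>x\<bar> ^ k"
    using assms(1) by (rule power_mult_le_power_abs)
  also have "\<dots> \<le> l ^ k * (\<bar>x\<bar> powr q * K powr (real k - q))"
    using assms by (intro mult_left_mono abs_power_le_powr_mult) auto
  also have "\<dots> \<le> l ^ k * (\<bar>x\<bar> powr q * (a powr (real k - q) + k * max 0 (1 - a / K) * K powr (real k - q)))"
    using assms by (intro mult_left_mono powr_le_powr_plus_defect) auto
  also have "\<dots> = \<bar>x\<bar> powr q * (a powr (-q) * (l * a) ^ k + max 0 (1 - a / K) * K powr (-q) * (k * (l * K) ^ k))"
    using assms by (simp add: powr_add[symmetric] powr_realpow[symmetric] algebra_simps)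
  finally show ?thesis .
qed

lemma exp_tail_le:
  fixes l a K q x :: real
  assumes "0 \<le> l" and "0 < a" and "0 < K" and "\<bar>x\<bar> \<le> K" and "0 < q" and "q \<le> real M"
  shows "exp (l * x) - (\<Sum>k<M. (l * x) ^ k / fact k) \<le> \<bar>x\<bar> powr q *
           (a powr (-q) * (exp (l * a) - (\<Sum>k<M. (l * a) ^ k / fact k))
            + max 0 (1 - a / K) * K powr (-q) * ((l * K) ^ M / fact (M - 1) * exp (l * K)))"
proof -
  define R where "R = max 0 (1 - a / K)"
  define T where "T = (\<Sum>j. (j + M) * (l * K) ^ (j + M) / fact (j + M))"
  have "0 < M"
    using assms by linarith
  have "0 \<le> l * K"
    using assms by simp
  note T = weighted_exp_tail_le[OF this \<open>0 < M\<close>, folded T_def]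
  have term_le: "(l * x) ^ k / fact k \<le> \<bar>x\<bar> powr q *
      (a powr (-q) * ((l * a) ^ k / fact k) + R * K powr (-q) * (k * (l * K) ^ k / fact k))"
    if "M \<le> k" for k
  proof -
    have "(l * x) ^ k / fact k
        \<le> \<bar>x\<bar> powr q * (a powr (-q) * (l * a) ^ k + R * K powr (-q) * (k * (l * K) ^ k)) / fact k"
      using power_le_tail_majorant[OF assms(1-5), of k] assms(6) that unfolding R_def
      by (intro divide_right_mono) auto
    then show ?thesis
      by (simp add: field_simps)
  qed
  have sums: "(\<lambda>j. \<bar>x\<bar> powr q * (a powr (-q) * ((l * a) ^ (j + M) / fact (j + M))
           + R * K powr (-q) * ((j + M) * (l * K) ^ (j + M) / fact (j + M))))
        sums (\<bar>x\<bar> powr q * (a powr (-q) * (exp (l * a) - (\<Sum>k<M. (l * a) ^ k / fact k)) + R * K powr (-q) * T))"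
    using summable_sums[OF T(1)] unfolding T_def by (intro sums_mult sums_add exp_tail_sums)
  have "exp (l * x) - (\<Sum>k<M. (l * x) ^ k / fact k)
      \<le> \<bar>x\<bar> powr q * (a powr (-q) * (exp (l * a) - (\<Sum>k<M. (l * a) ^ k / fact k)) + R * K powr (-q) * T)"
    by (rule sums_le[OF _ exp_tail_sums sums]) (rule term_le, simp)
  also have "\<dots> \<le> \<bar>x\<bar> powr q * (a powr (-q) * (exp (l * a) - (\<Sum>k<M. (l * a) ^ k / fact k))
      + R * K powr (-q) * ((l * K) ^ M / fact (M - 1) * exp (l * K)))"
    using T(2) \<open>0 < M\<close> assms by (intro mult_left_mono add_left_mono) (auto simp: R_def)
  finally show ?thesis
    by (simp add: R_def)
qed

section \<open>A majorant of the exponential and the Chernoff bound\<close>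

text \<open>
  The majorant exp(l x) \<le> 1 + l x + quadratic_coeff l a q x^2 + moment_coeff l a K q |x|^q on
  [-K, K]: the terms of the exponential series with k \<le> q are split between x^2 and |x|^q in
  the ratio (q - k) : (k - 2), those with k > q are charged to |x|^q.
\<close>

definition quadratic_coeff :: "real \<Rightarrow> real \<Rightarrow> real \<Rightarrow> real" where
  "quadratic_coeff l a q =
     (\<Sum>k=2..<nat \<lfloor>q\<rfloor> + 1. l ^ k / fact k * ((q - k) / (q - 2) * a powr (real k - 2)))"

definition moment_coeff :: "real \<Rightarrow> real \<Rightarrow> real \<Rightarrow> real \<Rightarrow> real" where
  "moment_coeff l a K q =
     (\<Sum>k=2..<nat \<lfloor>q\<rfloor> + 1. l ^ k / fact k * ((real k - 2) / (q - 2) * a powr (real k - q)))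
     + a powr (-q) * (exp (l * a) - (\<Sum>k<nat \<lfloor>q\<rfloor> + 1. (l * a) ^ k / fact k))
     + max 0 (1 - a / K) * K powr (-q) * ((l * K) ^ (nat \<lfloor>q\<rfloor> + 1) / fact (nat \<lfloor>q\<rfloor>) * exp (l * K))"

definition log_mgf_bound :: "real \<Rightarrow> real \<Rightarrow> real \<Rightarrow> real \<Rightarrow> real \<Rightarrow> real" where
  "log_mgf_bound \<sigma> a K q l = \<sigma>\<^sup>2 / a\<^sup>2 * (exp (l * a) - 1 - l * a)
     + max 0 (1 - a / K) * (\<sigma>\<^sup>2 * a powr (q - 2)) * K powr (-q)
       * ((l * K) ^ (nat \<lfloor>q\<rfloor> + 1) / fact (nat \<lfloor>q\<rfloor>) * exp (l * K))"

lemma floor_index_bounds: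
  assumes "2 < q"
  shows "2 \<le> nat \<lfloor>q\<rfloor>" and "q < real (nat \<lfloor>q\<rfloor> + 1)" and "real (nat \<lfloor>q\<rfloor>) \<le> q"
  using assms by linarith+

lemma exp_le_quadratic_moment:
  assumes "0 \<le> l" and "0 < a" and "0 < K" and "2 < q" and "\<bar>x\<bar> \<le> K"
  shows "exp (l * x) \<le> 1 + l * x + quadratic_coeff l a q * x\<^sup>2 + moment_coeff l a K q * \<bar>x\<bar> powr q"
proof -
  define M where "M = nat \<lfloor>q\<rfloor> + 1"
  have M: "2 \<le> M" "real M \<le> q + 1" "q \<le> real M"
    using floor_index_bounds[OF assms(4)] by (auto simp: M_def)
  have "exp (l * x) = (\<Sum>k<M. (l * x) ^ k / fact k) + (exp (l * x) - (\<Sum>k<M. (l * x) ^ k / fact k))"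
    by simp
  also have "\<dots> \<le> 1 + l * x + quadratic_coeff l a q * x\<^sup>2 + moment_coeff l a K q * \<bar>x\<bar> powr q"
    using exp_head_le[OF assms(1,2,4) M(1,2), of x] exp_tail_le[OF assms(1-3,5) _ M(3)] assms
    by (simp add: quadratic_coeff_def moment_coeff_def M_def algebra_simps)
  finally show ?thesis .
qed

lemma quadratic_coeff_nonneg:
  assumes "0 \<le> l" and "0 < a" and "2 < q"
  shows "0 \<le> quadratic_coeff l a q"
  unfolding quadratic_coeff_def
proof (intro sum_nonneg mult_nonneg_nonneg)
  fix k assume "k \<in> {2..<nat \<lfloor>q\<rfloor> + 1}"
  then have "real k \<le> q"
    using floor_index_bounds[OF assms(3)] by auto
  then show "0 \<le> (q - k) / (q - 2)"
    using assms by simp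
qed (use assms in auto)

lemma moment_coeff_nonneg:
  assumes "0 \<le> l" and "0 < a" and "0 < K" and "2 < q"
  shows "0 \<le> moment_coeff l a K q"
proof -
  have "0 \<le> exp (l * a) - (\<Sum>k<nat \<lfloor>q\<rfloor> + 1. (l * a) ^ k / fact k)"
    by (rule sums_le[OF _ sums_zero exp_tail_sums]) (use assms in simp)
  moreover have "0 \<le> (\<Sum>k=2..<nat \<lfloor>q\<rfloor> + 1. l ^ k / fact k * ((real k - 2) / (q - 2) * a powr (real k - q)))"
    using assms by (intro sum_nonneg) auto
  ultimately show ?thesis
    unfolding moment_coeff_def using assms by (intro add_nonneg_nonneg mult_nonneg_nonneg) auto
qed

lemma quadratic_moment_coeff_combine:
  assumes "0 < a" and "2 < q"
  shows "quadratic_coeff l a q * \<sigma>\<^sup>2 + moment_coeff l a K q * (\<sigma>\<^sup>2 * a powr (q - 2))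
           = log_mgf_bound \<sigma> a K q l"
proof -
  define M where "M = nat \<lfloor>q\<rfloor> + 1"
  define E where "E = exp (l * a) - (\<Sum>k<M. (l * a) ^ k / fact k)"
  define T where "T = max 0 (1 - a / K) * K powr (-q) * ((l * K) ^ M / fact (M - 1) * exp (l * K))"
  define c where "c k = l ^ k / fact k * ((q - k) / (q - 2) * a powr (real k - 2))" for k :: nat
  define d where "d k = l ^ k / fact k * ((real k - 2) / (q - 2) * a powr (real k - q))" for k :: nat
  have "2 \<le> M"
    using floor_index_bounds[OF assms(2)] by (simp add: M_def)
  have qc: "quadratic_coeff l a q = (\<Sum>k=2..<M. c k)"
    unfolding quadratic_coeff_def M_def c_def ..
  have mc: "moment_coeff l a K q = (\<Sum>k=2..<M. d k) + a powr (-q) * E + T"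
    unfolding moment_coeff_def M_def d_def E_def T_def by (simp only: add_diff_cancel_right')
  have lb: "log_mgf_bound \<sigma> a K q l = \<sigma>\<^sup>2 / a\<^sup>2 * (exp (l * a) - 1 - l * a) + \<sigma>\<^sup>2 * a powr (q - 2) * T"
    unfolding log_mgf_bound_def M_def T_def by (simp add: mult_ac)
  have head: "c k * \<sigma>\<^sup>2 + d k * (\<sigma>\<^sup>2 * a powr (q - 2)) = \<sigma>\<^sup>2 / a\<^sup>2 * ((l * a) ^ k / fact k)" for k
  proof -
    define w1 where "w1 = (q - k) / (q - 2)"
    define w2 where "w2 = (real k - 2) / (q - 2)"
    have "a powr (real k - q) = a powr (real k - 2) / a powr (q - 2)"
      using powr_diff[of a "real k - 2" "q - 2"] by simp
    then have "c k * \<sigma>\<^sup>2 + d k * (\<sigma>\<^sup>2 * a powr (q - 2))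
        = (w1 + w2) * (l ^ k / fact k * \<sigma>\<^sup>2 * a powr (real k - 2))"
      using assms unfolding c_def d_def w1_def[symmetric] w2_def[symmetric] by (simp add: field_simps)
    also have "w1 + w2 = 1"
      using assms by (simp add: w1_def w2_def add_divide_distrib[symmetric])
    also have "a powr (real k - 2) = a ^ k / a\<^sup>2"
      using assms by (simp add: powr_diff powr_realpow)
    also have "l ^ k / fact k * \<sigma>\<^sup>2 * (a ^ k / a\<^sup>2) = \<sigma>\<^sup>2 / a\<^sup>2 * ((l * a) ^ k / fact k)"
      by (simp add: power_mult_distrib mult_ac)
    finally show ?thesis
      by simp
  qed
  have "a powr (q - 2) * a powr (-q) = a powr (-2)"
    by (subst powr_add[symmetric]) simp
  also have "\<dots> = 1 / a\<^sup>2"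
    using assms by (simp add: powr_minus_divide)
  finally have "quadratic_coeff l a q * \<sigma>\<^sup>2 + moment_coeff l a K q * (\<sigma>\<^sup>2 * a powr (q - 2))
      = (\<Sum>k=2..<M. c k * \<sigma>\<^sup>2 + d k * (\<sigma>\<^sup>2 * a powr (q - 2))) + \<sigma>\<^sup>2 / a\<^sup>2 * E
        + \<sigma>\<^sup>2 * a powr (q - 2) * T"
    unfolding qc mc by (simp add: sum.distrib sum_distrib_left sum_distrib_right ring_distribs mult_ac)
  also have "\<dots> = \<sigma>\<^sup>2 / a\<^sup>2 * ((\<Sum>k=2..<M. (l * a) ^ k / fact k) + E) + \<sigma>\<^sup>2 * a powr (q - 2) * T"
    by (simp only: head sum_distrib_left distrib_left)
  also have "(\<Sum>k=2..<M. (l * a) ^ k / fact k) + E = exp (l * a) - 1 - l * a"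
    using exp_partial_sum_split[OF \<open>2 \<le> M\<close>, of "l * a"] by (simp add: E_def)
  finally show ?thesis
    unfolding lb .
qed

context prob_space
begin

lemma integrable_bounded_comp:
  fixes X :: "'a \<Rightarrow> real" and g :: "real \<Rightarrow> real"
  assumes "X \<in> borel_measurable M" and "g \<in> borel_measurable borel"
    and "AE \<omega> in M. \<bar>X \<omega>\<bar> \<le> K" and "\<And>x. \<bar>x\<bar> \<le> K \<Longrightarrow> \<bar>g x\<bar> \<le> C"
  shows "integrable M (\<lambda>\<omega>. g (X \<omega>))"
proof (rule integrable_const_bound[where B = C])
  show "AE \<omega> in M. norm (g (X \<omega>)) \<le> C"
    using assms(3) by eventually_elim (simp add: assms(4))
  show "(\<lambda>\<omega>. g (X \<omega>)) \<in> borel_measurable M"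
    using assms(1,2) by measurable
qed

lemma expectation_exp_le:
  fixes X :: "'a \<Rightarrow> real" and K l q \<alpha> \<beta> :: real
  assumes X [measurable]: "X \<in> borel_measurable M" and mean0: "expectation X = 0"
    and bnd: "AE \<omega> in M. \<bar>X \<omega>\<bar> \<le> K" and "0 \<le> l" and "0 \<le> q"
    and majorant: "\<And>x. \<bar>x\<bar> \<le> K \<Longrightarrow> exp (l * x) \<le> 1 + l * x + \<alpha> * x\<^sup>2 + \<beta> * \<bar>x\<bar> powr q"
  shows "expectation (\<lambda>\<omega>. exp (l * X \<omega>))
           \<le> exp (\<alpha> * expectation (\<lambda>\<omega>. (X \<omega>)\<^sup>2) + \<beta> * expectation (\<lambda>\<omega>. \<bar>X \<omega>\<bar> powr q))"
proof -
  have int_exp: "integrable M (\<lambda>\<omega>. exp (l * X \<omega>))"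
    by (rule integrable_bounded_comp[OF X _ bnd, where C = "exp (l * K)"])
      (measurable, use \<open>0 \<le> l\<close> in \<open>auto intro!: mult_left_mono dest: abs_le_D1\<close>)
  have int_X: "integrable M X"
    using integrable_bounded_comp[OF X _ bnd, of "\<lambda>x. x" K] by simp
  have int_sq: "integrable M (\<lambda>\<omega>. (X \<omega>)\<^sup>2)"
    by (rule integrable_bounded_comp[OF X _ bnd, where C = "K\<^sup>2"])
      (measurable, auto simp: abs_le_square_iff[symmetric] intro: order.trans[OF _ abs_ge_self])
  have int_pow: "integrable M (\<lambda>\<omega>. \<bar>X \<omega>\<bar> powr q)"
    by (rule integrable_bounded_comp[OF X _ bnd, where C = "K powr q"])
      (measurable, use \<open>0 \<le> q\<close> in \<open>auto intro: powr_mono2\<close>)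
  have "expectation (\<lambda>\<omega>. exp (l * X \<omega>))
      \<le> expectation (\<lambda>\<omega>. 1 + l * X \<omega> + \<alpha> * (X \<omega>)\<^sup>2 + \<beta> * \<bar>X \<omega>\<bar> powr q)"
    using bnd int_exp int_X int_sq int_pow
    by (intro Bochner_Integration.integral_mono_AE) (auto intro: majorant)
  also have "\<dots> = 1 + \<alpha> * expectation (\<lambda>\<omega>. (X \<omega>)\<^sup>2) + \<beta> * expectation (\<lambda>\<omega>. \<bar>X \<omega>\<bar> powr q)"
    using int_X int_sq int_pow mean0 by (simp add: prob_space)
  also have "\<dots> \<le> exp (\<alpha> * expectation (\<lambda>\<omega>. (X \<omega>)\<^sup>2) + \<beta> * expectation (\<lambda>\<omega>. \<bar>X \<omega>\<bar> powr q))"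
    using exp_ge_add_one_self[of "\<alpha> * expectation (\<lambda>\<omega>. (X \<omega>)\<^sup>2) + \<beta> * expectation (\<lambda>\<omega>. \<bar>X \<omega>\<bar> powr q)"]
    by linarith
  finally show ?thesis .
qed

lemma indep_vars_Chernoff_ineq_ge:
  fixes X :: "'i \<Rightarrow> 'a \<Rightarrow> real"
  assumes "finite I" and indep: "indep_vars (\<lambda>_. borel) X I" and "0 < l"
    and int: "\<And>i. i \<in> I \<Longrightarrow> integrable M (\<lambda>\<omega>. exp (l * X i \<omega>))"
  shows "prob {\<omega> \<in> space M. t \<le> (\<Sum>i\<in>I. X i \<omega>)}
           \<le> exp (- l * t) * (\<Prod>i\<in>I. expectation (\<lambda>\<omega>. exp (l * X i \<omega>)))"
proof -
  have indep_exp: "indep_vars (\<lambda>_. borel) (\<lambda>i \<omega>. exp (l * X i \<omega>)) I"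
    by (rule indep_vars_compose2[OF indep]) measurable
  have "{\<omega> \<in> space M. t \<le> (\<Sum>i\<in>I. X i \<omega>)}
      = {\<omega> \<in> space M. exp (l * t) \<le> (\<Prod>i\<in>I. exp (l * X i \<omega>))}"
    using \<open>0 < l\<close> \<open>finite I\<close> by (simp add: exp_sum[symmetric] sum_distrib_left[symmetric])
  also have "prob \<dots> \<le> expectation (\<lambda>\<omega>. \<Prod>i\<in>I. exp (l * X i \<omega>)) / exp (l * t)"
    using indep_vars_integrable[OF \<open>finite I\<close> indep_exp int]
    by (intro integral_Markov_inequality_measure[where A = "space M"]) (auto intro!: prod_nonneg AE_I2)
  also have "\<dots> = exp (- l * t) * (\<Prod>i\<in>I. expectation (\<lambda>\<omega>. exp (l * X i \<omega>)))"
    using indep_vars_lebesgue_integral[OF \<open>finite I\<close> indep_exp int]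
    by (simp add: exp_minus field_simps)
  finally show ?thesis .
qed

lemma prod_mgf_le:
  fixes X :: "'i \<Rightarrow> 'a \<Rightarrow> real" and I :: "'i set" and \<sigma> a K q l :: real
  assumes "finite I" and "I \<noteq> {}" and X: "\<And>i. i \<in> I \<Longrightarrow> X i \<in> borel_measurable M"
    and mean0: "\<And>i. i \<in> I \<Longrightarrow> expectation (X i) = 0"
    and bnd: "\<And>i. i \<in> I \<Longrightarrow> AE \<omega> in M. \<bar>X i \<omega>\<bar> \<le> K"
    and var: "(1 / card I) * (\<Sum>i\<in>I. variance (X i)) \<le> \<sigma>\<^sup>2"
    and mom: "(1 / card I) * (\<Sum>i\<in>I. expectation (\<lambda>\<omega>. \<bar>X i \<omega>\<bar> powr q)) \<le> \<sigma>\<^sup>2 * a powr (q - 2)"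
    and "0 < a" and "0 < K" and "2 < q" and "0 < l"
  shows "(\<Prod>i\<in>I. expectation (\<lambda>\<omega>. exp (l * X i \<omega>))) \<le> exp (card I * log_mgf_bound \<sigma> a K q l)"
proof -
  define n where "n = real (card I)"
  define \<alpha> where "\<alpha> = quadratic_coeff l a q"
  define \<beta> where "\<beta> = moment_coeff l a K q"
  define s where "s i = \<alpha> * expectation (\<lambda>\<omega>. (X i \<omega>)\<^sup>2) + \<beta> * expectation (\<lambda>\<omega>. \<bar>X i \<omega>\<bar> powr q)" for i
  have "0 < n"
    using assms(1,2) by (simp add: n_def card_gt_0_iff)
  have "expectation (\<lambda>\<omega>. exp (l * X i \<omega>)) \<le> exp (s i)" if "i \<in> I" for i
    unfolding s_def \<alpha>_def \<beta>_def using assms that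
    by (intro expectation_exp_le[OF X mean0 bnd] exp_le_quadratic_moment) auto
  then have "(\<Prod>i\<in>I. expectation (\<lambda>\<omega>. exp (l * X i \<omega>))) \<le> exp (\<Sum>i\<in>I. s i)"
    unfolding exp_sum[OF \<open>finite I\<close>] by (intro prod_mono) auto
  also have "(\<Sum>i\<in>I. s i) = \<alpha> * (\<Sum>i\<in>I. variance (X i)) + \<beta> * (\<Sum>i\<in>I. expectation (\<lambda>\<omega>. \<bar>X i \<omega>\<bar> powr q))"
    using mean0 by (simp add: s_def sum.distrib sum_distrib_left)
  also have "\<dots> \<le> \<alpha> * (n * \<sigma>\<^sup>2) + \<beta> * (n * (\<sigma>\<^sup>2 * a powr (q - 2)))"
    using var mom \<open>0 < n\<close> assms quadratic_coeff_nonneg moment_coeff_nonneg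
    by (intro add_mono mult_left_mono) (auto simp: n_def \<alpha>_def \<beta>_def field_simps)
  also have "\<dots> = n * (\<alpha> * \<sigma>\<^sup>2 + \<beta> * (\<sigma>\<^sup>2 * a powr (q - 2)))"
    by (simp add: algebra_simps)
  also have "\<dots> = n * log_mgf_bound \<sigma> a K q l"
    unfolding \<alpha>_def \<beta>_def quadratic_moment_coeff_combine[OF \<open>0 < a\<close> \<open>2 < q\<close>] ..
  finally show ?thesis
    by (simp add: n_def)
qed

lemma mean_ge_prob_le:
  fixes X :: "'i \<Rightarrow> 'a \<Rightarrow> real" and I :: "'i set" and \<sigma> a K q l t :: real
  assumes "finite I" and "I \<noteq> {}" and indep: "indep_vars (\<lambda>_. borel) X I"
    and "\<And>i. i \<in> I \<Longrightarrow> expectation (X i) = 0"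
    and bnd: "AE \<omega> in M. \<forall>i\<in>I. \<bar>X i \<omega>\<bar> \<le> K"
    and "(1 / card I) * (\<Sum>i\<in>I. variance (X i)) \<le> \<sigma>\<^sup>2"
    and "(1 / card I) * (\<Sum>i\<in>I. expectation (\<lambda>\<omega>. \<bar>X i \<omega>\<bar> powr q)) \<le> \<sigma>\<^sup>2 * a powr (q - 2)"
    and "0 < a" and "0 < K" and "2 < q" and "0 < l"
  shows "prob {\<omega> \<in> space M. t \<le> (1 / card I) * (\<Sum>i\<in>I. X i \<omega>)}
           \<le> exp (- card I * (l * t - log_mgf_bound \<sigma> a K q l))"
proof -
  define n where "n = real (card I)"
  have "0 < n"
    using assms(1,2) by (simp add: n_def card_gt_0_iff)
  have X [measurable]: "X i \<in> borel_measurable M" if "i \<in> I" for i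
    using indep that by (simp add: indep_vars_def)
  have bnd_i: "AE \<omega> in M. \<bar>X i \<omega>\<bar> \<le> K" if "i \<in> I" for i
    using bnd by eventually_elim (use that in auto)
  have "{\<omega> \<in> space M. t \<le> (1 / card I) * (\<Sum>i\<in>I. X i \<omega>)} = {\<omega> \<in> space M. n * t \<le> (\<Sum>i\<in>I. X i \<omega>)}"
    using \<open>0 < n\<close> by (auto simp: n_def field_simps)
  also have "prob \<dots> \<le> exp (- l * (n * t)) * (\<Prod>i\<in>I. expectation (\<lambda>\<omega>. exp (l * X i \<omega>)))"
    using assms bnd_i
    by (intro indep_vars_Chernoff_ineq_ge integrable_bounded_comp[OF X, where C = "exp (l * K)"])
      (auto intro!: mult_left_mono dest: abs_le_D1)
  also have "\<dots> \<le> exp (- l * (n * t)) * exp (n * log_mgf_bound \<sigma> a K q l)"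
    using prod_mgf_le[OF assms(1,2) X assms(4) bnd_i assms(6-11)] by (simp add: n_def)
  also have "\<dots> = exp (- n * (l * t - log_mgf_bound \<sigma> a K q l))"
    by (simp add: exp_add[symmetric] algebra_simps)
  finally show ?thesis
    by (simp add: n_def)
qed

end

section \<open>Choosing the Chernoff parameter\<close>

lemma exp_minus_linear_le:
  fixes u v :: real
  assumes "0 \<le> u" and "0 \<le> v" and "u \<le> ln (1 + v)"
  shows "exp u - 1 - u \<le> u * v"
proof -
  have "(1 - u) * exp u \<le> exp (- u) * exp u"
    using exp_ge_add_one_self[of "- u"] by (intro mult_right_mono) auto
  then have "exp u - 1 - u \<le> u * (exp u - 1)"
    by (simp add: exp_minus algebra_simps)
  moreover have "exp u \<le> 1 + v"
    using exp_le_cancel_iff[of u "ln (1 + v)"] assms by simp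
  then have "u * (exp u - 1) \<le> u * v"
    using assms(1) by (simp add: mult_left_mono)
  ultimately show ?thesis
    by linarith
qed

lemma power_self_le_fact:
  assumes "0 < M"
  shows "real M ^ M \<le> 10 ^ M * fact (M - 1)"
proof -
  have "real M ^ M / fact M \<le> exp (real M)"
    using sum_le_suminf[OF sums_summable[OF exp_sums_real], of "{M}"]
    by (simp add: sums_unique[OF exp_sums_real])
  also have "exp (real M) = exp 1 ^ M"
    by (simp add: exp_of_nat_mult[symmetric])
  also have "\<dots> \<le> 3 ^ M"
    using exp_le by (intro power_mono) auto
  finally have "real M ^ M \<le> 3 ^ M * (real M * fact (M - 1))"
    using assms fact_reduce[of M, where 'a = real] by (simp add: field_simps)
  also have "\<dots> \<le> 3 ^ M * (2 ^ M * fact (M - 1))"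
    using less_exp[of M] by (intro mult_left_mono mult_right_mono) auto
  also have "\<dots> \<le> 10 ^ M * fact (M - 1)"
    using power_mono[of "6::real" 10 M] by (simp add: power_mult_distrib[symmetric])
  finally show ?thesis .
qed

lemma lambertW_power_exp_le:
  fixes c :: real
  assumes "0 < c" and "0 < M"
  defines "W \<equiv> lambertW (c powr (1 / M))"
  shows "0 < W" and "(M * W) ^ M * exp (M * W) / fact (M - 1) \<le> 10 ^ M * c"
proof -
  have W: "0 < W" "W * exp W = c powr (1 / M)"
    using lambertW_pos[of "c powr (1 / M)"] lambertW_times_exp[of "c powr (1 / M)"] assms by auto
  then show "0 < W" by simp
  have "(M * W) ^ M * exp (M * W) = real M ^ M * (W * exp W) ^ M"
    by (simp add: exp_of_nat_mult power_mult_distrib)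
  also have "(W * exp W) ^ M = (c powr (1 / M)) ^ M"
    by (simp only: W(2))
  also have "\<dots> = c"
    using assms by (simp add: powr_power)
  finally have "(M * W) ^ M * exp (M * W) / fact (M - 1) = real M ^ M / fact (M - 1) * c"
    by simp
  also have "\<dots> \<le> 10 ^ M * c"
    using power_self_le_fact[OF \<open>0 < M\<close>] \<open>0 < c\<close> by (intro mult_right_mono) (auto simp: divide_le_eq)
  finally show "(M * W) ^ M * exp (M * W) / fact (M - 1) \<le> 10 ^ M * c" .
qed

lemma power_mult_exp_le_scaled:
  fixes l m K :: real
  assumes "0 < l" and "l \<le> m" and "0 < M" and "0 \<le> K"
  shows "l ^ M * exp (l * K) \<le> l / m * (m ^ M * exp (m * K))"
proof -
  have "l ^ (M - 1) * exp (l * K) \<le> m ^ (M - 1) * exp (m * K)"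
    using assms by (intro mult_mono power_mono) (auto intro: mult_right_mono)
  then have "l * (l ^ (M - 1) * exp (l * K)) \<le> l * (m ^ (M - 1) * exp (m * K))"
    using assms by (intro mult_left_mono) auto
  moreover have "x ^ M = x * x ^ (M - 1)" for x :: real
    using assms by (simp add: power_eq_if)
  ultimately show ?thesis
    using assms by (simp add: field_simps)
qed

lemma legendre_exp_excess_Psi:
  fixes s a v :: real
  assumes "0 < s" and "0 < a" and "0 < v"
  defines "l1 \<equiv> ln (1 + v) / a"
  shows "0 < l1"
    and "l1 * (s * a * v) - s * (exp (l1 * a) - 1 - l1 * a) = s * Psi v"
    and "\<And>l. 0 < l \<Longrightarrow> l \<le> l1 \<Longrightarrow> s * (exp (l * a) - 1 - l * a) \<le> l * (s * a * v)"
proof -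
  show "0 < l1"
    using assms(2,3) by (simp add: l1_def)
  have "l1 * a = ln (1 + v)"
    using assms(2) by (simp add: l1_def)
  then show "l1 * (s * a * v) - s * (exp (l1 * a) - 1 - l1 * a) = s * Psi v"
    using assms(3) by (simp add: Psi_def algebra_simps)
  fix l assume "0 < l" and "l \<le> l1"
  then have "exp (l * a) - 1 - l * a \<le> l * a * v"
    using assms(2,3) by (intro exp_minus_linear_le) (auto simp: l1_def field_simps)
  then show "s * (exp (l * a) - 1 - l * a) \<le> l * (s * a * v)"
    using assms(1) by (simp add: mult_left_mono mult_ac)
qed

lemma lambertW_remainder_bound:
  fixes P K y W :: real and m :: nat and H :: "real \<Rightarrow> real"
  assumes "0 < P" and "0 < K" and "0 < m" and "0 < y"
  defines "W \<equiv> lambertW ((y / (10 ^ m * P)) powr (1 / m))"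
    and "H \<equiv> \<lambda>l. P * (l * K) ^ m / fact (m - 1) * exp (l * K)"
  shows "0 < W" and "H (m * W / K) \<le> y"
    and "\<And>l. 0 < l \<Longrightarrow> l \<le> m * W / K \<Longrightarrow> H l \<le> l / (m * W / K) * H (m * W / K)"
proof -
  have "0 < y / (10 ^ m * P)"
    using assms(1,4) by simp
  note W = lambertW_power_exp_le[OF this assms(3), folded W_def]
  then show "0 < W" by simp
  have "H (m * W / K) = P * ((m * W) ^ m * exp (m * W) / fact (m - 1))"
    using assms(2) by (simp add: H_def)
  also have "\<dots> \<le> P * (10 ^ m * (y / (10 ^ m * P)))"
    using W(2) assms(1) by (intro mult_left_mono) auto
  also have "\<dots> = y"
    using assms(1) by simp
  finally show "H (m * W / K) \<le> y" .
  fix l assume "0 < l" and "l \<le> m * W / K"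
  have "H l = P * K ^ m / fact (m - 1) * (l ^ m * exp (l * K))"
    by (simp add: H_def power_mult_distrib)
  also have "\<dots> \<le> P * K ^ m / fact (m - 1) * (l / (m * W / K) * ((m * W / K) ^ m * exp (m * W / K * K)))"
    using \<open>0 < l\<close> \<open>l \<le> m * W / K\<close> assms(1-3)
    by (intro mult_left_mono power_mult_exp_le_scaled) auto
  also have "\<dots> = l / (m * W / K) * H (m * W / K)"
    by (simp add: H_def power_mult_distrib mult_ac)
  finally show "H l \<le> l / (m * W / K) * H (m * W / K)" .
qed

lemma legendre_sum_ge:
  fixes g H :: "real \<Rightarrow> real"
  assumes "0 \<le> y"
    and "0 < l1" and "y \<le> l1 * t1 - g l1" and "\<And>l. 0 < l \<Longrightarrow> l \<le> l1 \<Longrightarrow> g l \<le> l * t1"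
    and "0 < l2" and "H l2 \<le> y" and "2 * y \<le> l2 * t2"
    and "\<And>l. 0 < l \<Longrightarrow> l \<le> l2 \<Longrightarrow> H l \<le> l / l2 * H l2"
  shows "\<exists>l>0. y \<le> l * (t1 + t2) - (g l + H l)"
proof (cases "l1 \<le> l2")
  case True
  have "H l1 \<le> l1 / l2 * H l2"
    using assms(2,8) True by simp
  also have "\<dots> \<le> l1 / l2 * (l2 * t2)"
    using assms(1-2,5-7) by (intro mult_left_mono) auto
  finally have "H l1 \<le> l1 * t2"
    using assms(5) by simp
  then show ?thesis
    using assms(2,3) by (intro exI[of _ l1]) (auto simp: algebra_simps)
next
  case False
  then show ?thesis
    using assms(4)[of l2] assms(5-7) by (intro exI[of _ l2]) (auto simp: algebra_simps)
qed

lemma log_mgf_bound_legendre_ge: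
  fixes \<sigma> a K q y :: real
  assumes "0 < \<sigma>" and "0 < a" and "0 < K" and "2 < q" and "0 < y"
  defines "R \<equiv> max 0 (1 - a / K)" and "m \<equiv> nat \<lfloor>q\<rfloor> + 1"
  defines "W \<equiv> lambertW ((y * K powr q / (10 ^ m * R * (\<sigma>\<^sup>2 * a powr (q - 2)))) powr (1 / m))"
  shows "\<exists>l>0. y \<le> l * (\<sigma>\<^sup>2 / a * Psi_inv (a\<^sup>2 / \<sigma>\<^sup>2 * y) + (if R = 0 then 0 else 2 * K * y / (q * W)))
                   - log_mgf_bound \<sigma> a K q l"
proof -
  define s where "s = \<sigma>\<^sup>2 / a\<^sup>2"
  define v where "v = Psi_inv (a\<^sup>2 / \<sigma>\<^sup>2 * y)"
  define t2 where "t2 = (if R = 0 then 0 else 2 * K * y / (q * W))"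
  define P where "P = R * \<sigma>\<^sup>2 * a powr (q - 2) * K powr (-q)"
  define H where "H l = P * (l * K) ^ m / fact (m - 1) * exp (l * K)" for l
  have "0 < s" and "\<sigma>\<^sup>2 / a = s * a"
    using assms(1,2) by (simp_all add: s_def power2_eq_square)
  have bound: "log_mgf_bound \<sigma> a K q l = s * (exp (l * a) - 1 - l * a) + H l" for l
    by (simp add: log_mgf_bound_def s_def H_def P_def R_def m_def mult_ac)
  have "0 < v" and "s * Psi v = y"
    using Psi_inv_pos[of "a\<^sup>2 / \<sigma>\<^sup>2 * y"] Psi_Psi_inv[of "a\<^sup>2 / \<sigma>\<^sup>2 * y"] assms(1,2,5)
    by (auto simp: v_def s_def)
  \<comment> \<open>ln(1 + v)/a is the optimal rate for the Bennett part, m W/K keeps the remainder below y\<close>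
  note l1 = legendre_exp_excess_Psi[OF \<open>0 < s\<close> assms(2) \<open>0 < v\<close>, unfolded \<open>s * Psi v = y\<close>]
  show ?thesis
  proof (cases "R = 0")
    case True
    then show ?thesis
      using l1(1,2) unfolding \<open>\<sigma>\<^sup>2 / a = s * a\<close> v_def[symmetric]
      by (intro exI[of _ "ln (1 + v) / a"]) (simp add: bound H_def P_def)
  next
    case False
    then have "0 < R"
      by (simp add: R_def)
    then have "0 < P"
      using assms(1-3) by (simp add: P_def)
    have "q < real m"
      using floor_index_bounds[OF assms(4)] by (simp add: m_def)
    then have "0 < m"
      using assms(4) by linarith
    have W: "W = lambertW ((y / (10 ^ m * P)) powr (1 / m))"
      by (simp add: W_def P_def powr_minus divide_simps mult_ac)
    note l2 = lambertW_remainder_bound[OF \<open>0 < P\<close> assms(3) \<open>0 < m\<close> assms(5), folded W H_def]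
    have "2 * y \<le> 2 * y * (m / q)"
      using mult_left_mono[of 1 "m / q" "2 * y"] \<open>q < m\<close> assms(4,5) by simp
    also have "2 * y * (m / q) = m * W / K * t2"
      using False l2(1) assms(3,4) by (simp add: t2_def field_simps)
    finally have "2 * y \<le> m * W / K * t2" .
    moreover have "0 < m * W / K"
      using l2(1) \<open>0 < m\<close> assms(3) by simp
    ultimately have "\<exists>l>0. y \<le> l * (s * a * v + t2) - (s * (exp (l * a) - 1 - l * a) + H l)"
      using assms(5)
      by (intro legendre_sum_ge[where g = "\<lambda>l. s * (exp (l * a) - 1 - l * a)",
            OF _ l1(1) eq_refl[OF l1(2)[symmetric]] l1(3) _ l2(2) _ l2(3)]) auto
    then show ?thesis
      unfolding bound \<open>\<sigma>\<^sup>2 / a = s * a\<close> v_def[symmetric] t2_def[symmetric] .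
  qed
qed

lemma (in prob_space) mean_less_prob_ge:
  fixes X :: "'i \<Rightarrow> 'a \<Rightarrow> real" and I :: "'i set" and \<sigma> a K q y :: real
  assumes "finite I" and "I \<noteq> {}" and "indep_vars (\<lambda>_. borel) X I"
    and "\<And>i. i \<in> I \<Longrightarrow> expectation (X i) = 0"
    and "AE \<omega> in M. \<forall>i\<in>I. \<bar>X i \<omega>\<bar> \<le> K"
    and "(1 / card I) * (\<Sum>i\<in>I. variance (X i)) \<le> \<sigma>\<^sup>2"
    and "(1 / card I) * (\<Sum>i\<in>I. expectation (\<lambda>\<omega>. \<bar>X i \<omega>\<bar> powr q)) \<le> \<sigma>\<^sup>2 * a powr (q - 2)"
    and "0 < \<sigma>" and "0 < a" and "0 < K" and "2 < q" and "0 < y"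
  defines "R \<equiv> max 0 (1 - a / K)" and "m \<equiv> nat \<lfloor>q\<rfloor> + 1"
  defines "W \<equiv> lambertW ((y * K powr q / (10 ^ m * R * (\<sigma>\<^sup>2 * a powr (q - 2)))) powr (1 / m))"
  shows "1 - exp (- card I * y) \<le> prob {\<omega> \<in> space M. (1 / card I) * (\<Sum>i\<in>I. X i \<omega>)
           < \<sigma>\<^sup>2 / a * Psi_inv (a\<^sup>2 / \<sigma>\<^sup>2 * y) + (if R = 0 then 0 else 2 * K * y / (q * W))}"
    (is "_ \<le> prob {\<omega> \<in> space M. ?mean \<omega> < ?t}")
proof -
  obtain l where "0 < l" and l: "y \<le> l * ?t - log_mgf_bound \<sigma> a K q l"
    using log_mgf_bound_legendre_ge[OF assms(8-12)] unfolding R_def m_def W_def by blast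
  have "X i \<in> borel_measurable M" if "i \<in> I" for i
    using assms(3) that by (simp add: indep_vars_def)
  then have [measurable]: "?mean \<in> borel_measurable M"
    by (intro borel_measurable_times borel_measurable_sum measurable_const) auto
  have "prob {\<omega> \<in> space M. ?mean \<omega> < ?t} = prob (space M - {\<omega> \<in> space M. ?t \<le> ?mean \<omega>})"
    by (rule arg_cong[where f = prob]) auto
  also have "\<dots> = 1 - prob {\<omega> \<in> space M. ?t \<le> ?mean \<omega>}"
    by (rule prob_compl) measurable
  finally have "prob {\<omega> \<in> space M. ?mean \<omega> < ?t} = 1 - prob {\<omega> \<in> space M. ?t \<le> ?mean \<omega>}" .
  moreover have "prob {\<omega> \<in> space M. ?t \<le> ?mean \<omega>} \<le> exp (- card I * (l * ?t - log_mgf_bound \<sigma> a K q l))"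
    using mean_ge_prob_le[OF assms(1-7,9-11) \<open>0 < l\<close>] .
  moreover have "exp (- card I * (l * ?t - log_mgf_bound \<sigma> a K q l)) \<le> exp (- card I * y)"
    using l by (simp add: mult_left_mono)
  ultimately show ?thesis
    by linarith
qed

section \<open>Back to the parameters \<sigma> and B\<close>

lemma moment_scale_identities:
  fixes \<sigma> B K q :: real
  assumes "0 < \<sigma>" and "0 < B" and "0 < K" and "2 < q"
  defines "a \<equiv> (B powr q / \<sigma>\<^sup>2) powr (1 / (q - 2))"
  shows "0 < a"
    and "B powr q = \<sigma>\<^sup>2 * a powr (q - 2)"
    and "(B powr q / (\<sigma>\<^sup>2 * K powr (q - 2))) powr (1 / (q - 2)) = a / K"
    and "B * (\<sigma>\<^sup>2 / B\<^sup>2) powr ((q - 1) / (q - 2)) = \<sigma>\<^sup>2 / a"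
    and "(B\<^sup>2 / \<sigma>\<^sup>2) powr (q / (q - 2)) = a\<^sup>2 / \<sigma>\<^sup>2"
proof -
  have q2: "q - 2 \<noteq> 0"
    using assms(4) by simp
  have ln_sq: "ln (\<sigma>\<^sup>2) = 2 * ln \<sigma>"
    by (simp add: ln_realpow)
  show a: "0 < a"
    using assms(1,2) by (simp add: a_def)
  have ln_a: "ln a = (q * ln B - 2 * ln \<sigma>) / (q - 2)"
    using assms(1,2) by (simp add: a_def ln_div ln_sq)
  have ln_inj: "x = y" if "0 < x" "0 < y" "ln x = ln y" for x y :: real
    using that by simp
  show "B powr q = \<sigma>\<^sup>2 * a powr (q - 2)"
    using assms(1,2) q2 by (simp add: a_def powr_powr)
  show "(B powr q / (\<sigma>\<^sup>2 * K powr (q - 2))) powr (1 / (q - 2)) = a / K"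
  proof (rule ln_inj)
    have "ln ((B powr q / (\<sigma>\<^sup>2 * K powr (q - 2))) powr (1 / (q - 2)))
        = (q * ln B - 2 * ln \<sigma> - (q - 2) * ln K) / (q - 2)"
      using assms(1-4) by (simp add: ln_mult ln_div ln_sq)
    also have "\<dots> = ln (a / K)"
      using assms(1-4) a q2 by (simp add: ln_a ln_div field_simps)
    finally show "ln ((B powr q / (\<sigma>\<^sup>2 * K powr (q - 2))) powr (1 / (q - 2))) = ln (a / K)" .
  qed (use assms(1-4) a in auto)
  show "B * (\<sigma>\<^sup>2 / B\<^sup>2) powr ((q - 1) / (q - 2)) = \<sigma>\<^sup>2 / a"
  proof (rule ln_inj)
    have "ln (B * (\<sigma>\<^sup>2 / B\<^sup>2) powr ((q - 1) / (q - 2))) = ln B + (q - 1) / (q - 2) * (2 * ln \<sigma> - 2 * ln B)"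
      using assms(1-4) by (simp add: ln_mult ln_div ln_realpow)
    also have "\<dots> = ln (\<sigma>\<^sup>2 / a)"
      using assms(1-4) a q2 by (simp add: ln_a ln_div ln_realpow field_simps)
    finally show "ln (B * (\<sigma>\<^sup>2 / B\<^sup>2) powr ((q - 1) / (q - 2))) = ln (\<sigma>\<^sup>2 / a)" .
  qed (use assms(1-4) a in auto)
  show "(B\<^sup>2 / \<sigma>\<^sup>2) powr (q / (q - 2)) = a\<^sup>2 / \<sigma>\<^sup>2"
  proof (rule ln_inj)
    have "ln ((B\<^sup>2 / \<sigma>\<^sup>2) powr (q / (q - 2))) = q / (q - 2) * (2 * ln B - 2 * ln \<sigma>)"
      using assms(1-4) by (simp add: ln_div ln_realpow)
    also have "\<dots> = ln (a\<^sup>2 / \<sigma>\<^sup>2)"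
      using assms(1-4) a q2 by (simp add: ln_a ln_div ln_realpow field_simps)
    finally show "ln ((B\<^sup>2 / \<sigma>\<^sup>2) powr (q / (q - 2))) = ln (a\<^sup>2 / \<sigma>\<^sup>2)" .
  qed (use assms(1-4) a in auto)
qed

lemma lambertW_argument_eq:
  fixes B K L R q :: real and n M :: nat
  assumes "0 < B" and "0 < K" and "0 \<le> L" and "0 \<le> R" and "0 < n" and "0 < M"
  shows "(K / B) powr (q / M) * L powr (1 / M) / (10 * (n * R) powr (1 / M))
           = (L / n * K powr q / (10 ^ M * R * B powr q)) powr (1 / M)"
proof (cases "R = 0")
  case False
  have "L / n * K powr q / (10 ^ M * R * B powr q) = L * (K / B) powr q / (10 ^ M * (n * R))"
    using assms by (simp add: powr_divide)
  also have "(\<dots>) powr (1 / M) = L powr (1 / M) * ((K / B) powr q) powr (1 / M)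
      / ((10 ^ M) powr (1 / M) * (n * R) powr (1 / M))"
    using assms False by (simp add: powr_divide powr_mult)
  also have "((K / B) powr q) powr (1 / M) = (K / B) powr (q / M)"
    by (simp add: powr_powr)
  also have "(10 ^ M) powr (1 / M) = (10 :: real)"
    using assms by (simp add: powr_realpow[symmetric] powr_powr)
  finally show ?thesis
    by (simp add: mult.commute)
qed simp

lemma deviation_threshold_eq:
  fixes \<sigma> B K q L :: real and n :: nat
  assumes "0 < \<sigma>" and "0 < B" and "0 < K" and "2 < q" and "0 \<le> L" and "0 < n"
  defines "a \<equiv> (B powr q / \<sigma>\<^sup>2) powr (1 / (q - 2))" and "y \<equiv> L / n"
  defines "R \<equiv> max 0 (1 - a / K)" and "m \<equiv> nat \<lfloor>q\<rfloor> + 1"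
  defines "W \<equiv> lambertW ((y * K powr q / (10 ^ m * R * (\<sigma>\<^sup>2 * a powr (q - 2)))) powr (1 / m))"
  shows "B * (\<sigma>\<^sup>2 / B\<^sup>2) powr ((q - 1) / (q - 2)) * Psi_inv ((B\<^sup>2 / \<sigma>\<^sup>2) powr (q / (q - 2)) * L / real n)
      + (if max 0 (1 - (B powr q / (\<sigma>\<^sup>2 * K powr (q - 2))) powr (1 / (q - 2))) = 0 then 0
         else 2 * K * L / (real n * q)
           / lambertW ((K / B) powr (q / (real_of_int \<lfloor>q\<rfloor> + 1)) * L powr (1 / (real_of_int \<lfloor>q\<rfloor> + 1))
               / (10 * (real n * max 0 (1 - (B powr q / (\<sigma>\<^sup>2 * K powr (q - 2))) powr (1 / (q - 2))))
                       powr (1 / (real_of_int \<lfloor>q\<rfloor> + 1)))))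
    = \<sigma>\<^sup>2 / a * Psi_inv (a\<^sup>2 / \<sigma>\<^sup>2 * y) + (if R = 0 then 0 else 2 * K * y / (q * W))"
proof -
  note a = moment_scale_identities[OF assms(1-4), folded a_def]
  have "real_of_int \<lfloor>q\<rfloor> + 1 = real m"
    using assms(4) by (simp add: m_def)
  moreover have "(B\<^sup>2 / \<sigma>\<^sup>2) powr (q / (q - 2)) * L / real n = a\<^sup>2 / \<sigma>\<^sup>2 * y"
    by (simp add: a(5) y_def)
  moreover have "lambertW ((K / B) powr (q / m) * L powr (1 / m) / (10 * (real n * R) powr (1 / m))) = W"
    using lambertW_argument_eq[OF assms(2,3,5) _ assms(6), of R m q] assms(4)
    by (simp add: W_def y_def R_def m_def a(2))
  moreover have "2 * K * L / (real n * q) / W = 2 * K * y / (q * W)"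
    by (simp add: y_def)
  ultimately show ?thesis
    unfolding a(3,4) R_def[symmetric] by simp
qed

theorem theorem4p2:
  fixes M :: "'a measure" and X :: "nat \<Rightarrow> 'a \<Rightarrow> real"
    and n :: nat and q \<sigma> B K :: real
  assumes "prob_space M"
    and "n > 0"
    and "q > 2" and "\<sigma> > 0" and "B > 0" and "K > 0"
    and "\<And>i. i \<in> {1..n} \<Longrightarrow> X i \<in> borel_measurable M"
    and "prob_space.indep_vars M (\<lambda>_. borel) X {1..n}"
    and "\<And>i. i \<in> {1..n} \<Longrightarrow> integrable M (X i)"
    and "\<And>i. i \<in> {1..n} \<Longrightarrow> prob_space.expectation M (X i) = 0"
    and "(1 / real n) * (\<Sum>i=1..n. prob_space.variance M (X i)) \<le> \<sigma>\<^sup>2"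
    and "(1 / real n) * (\<Sum>i=1..n. prob_space.expectation M (\<lambda>\<omega>. \<bar>X i \<omega>\<bar> powr q)) \<le> B powr q"
    and "AE \<omega> in M. \<forall>i\<in>{1..n}. \<bar>X i \<omega>\<bar> \<le> K"
  shows "\<forall>z::real. z > 1 \<longrightarrow>
    (let R = max 0 (1 - (B powr q / (\<sigma>\<^sup>2 * K powr (q - 2))) powr (1 / (q - 2)));
         m = real_of_int \<lfloor>q\<rfloor> + 1;
         rhs = B * (\<sigma>\<^sup>2 / B\<^sup>2) powr ((q - 1) / (q - 2))
                 * Psi_inv ((B\<^sup>2 / \<sigma>\<^sup>2) powr (q / (q - 2)) * ln z / real n)
               + (if R = 0 then 0 else
                   (2 * K * ln z / (real n * q)) /
                   lambertW ((K / B) powr (q / m) * (ln z) powr (1 / m)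
                             / (10 * (real n * R) powr (1 / m))))
     in measure M {\<omega> \<in> space M. (1 / real n) * (\<Sum>i=1..n. X i \<omega>) < rhs} \<ge> 1 - 1 / z)"
proof (intro allI impI)
  fix z :: real
  assume "1 < z"
  interpret prob_space M
    by (fact assms(1))
  define a where "a = (B powr q / \<sigma>\<^sup>2) powr (1 / (q - 2))"
  note a = moment_scale_identities[OF assms(4-6,3), folded a_def]
  define y where "y = ln z / n"
  have "0 < ln z" and "0 < y"
    using \<open>1 < z\<close> assms(2) by (simp_all add: y_def)
  have "(1 / card {1..n}) * (\<Sum>i\<in>{1..n}. variance (X i)) \<le> \<sigma>\<^sup>2"
    and "(1 / card {1..n}) * (\<Sum>i\<in>{1..n}. expectation (\<lambda>\<omega>. \<bar>X i \<omega>\<bar> powr q)) \<le> \<sigma>\<^sup>2 * a powr (q - 2)"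
    using assms(11,12) by (simp_all add: a(2))
  from mean_less_prob_ge[OF _ _ assms(8,10,13) this assms(4) a(1) assms(6,3) \<open>0 < y\<close>] assms(2)
  have "1 - exp (- n * y) \<le> prob {\<omega> \<in> space M. (1 / n) * (\<Sum>i=1..n. X i \<omega>)
      < \<sigma>\<^sup>2 / a * Psi_inv (a\<^sup>2 / \<sigma>\<^sup>2 * y) + (if max 0 (1 - a / K) = 0 then 0
         else 2 * K * y / (q * lambertW ((y * K powr q / (10 ^ (nat \<lfloor>q\<rfloor> + 1) * max 0 (1 - a / K)
           * (\<sigma>\<^sup>2 * a powr (q - 2)))) powr (1 / (nat \<lfloor>q\<rfloor> + 1)))))}"
    by simp
  moreover have "exp (- n * y) = 1 / z"
    using \<open>1 < z\<close> assms(2) by (simp add: y_def exp_minus inverse_eq_divide)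
  ultimately show "let R = max 0 (1 - (B powr q / (\<sigma>\<^sup>2 * K powr (q - 2))) powr (1 / (q - 2)));
         m = real_of_int \<lfloor>q\<rfloor> + 1;
         rhs = B * (\<sigma>\<^sup>2 / B\<^sup>2) powr ((q - 1) / (q - 2))
                 * Psi_inv ((B\<^sup>2 / \<sigma>\<^sup>2) powr (q / (q - 2)) * ln z / real n)
               + (if R = 0 then 0 else
                   (2 * K * ln z / (real n * q)) /
                   lambertW ((K / B) powr (q / m) * (ln z) powr (1 / m)
                             / (10 * (real n * R) powr (1 / m))))
     in measure M {\<omega> \<in> space M. (1 / real n) * (\<Sum>i=1..n. X i \<omega>) < rhs} \<ge> 1 - 1 / z"
    unfolding Let_def deviation_threshold_eq[OF assms(4-6,3) less_imp_le[OF \<open>0 < ln z\<close>] assms(2)]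
    unfolding a_def[symmetric] y_def[symmetric] by (simp only:)
qed

end
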